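(* For $\mathbf{x}=(x_0,x_1),\ \mathbf{y}=(y_0,y_1)\in\mathbb{R}^2$ let $\langle\mathbf{x},\mathbf{y}\rangle:=x_0y_0-x_1y_1$ and $$k(\mathbf{x},\mathbf{y})=\frac{\langle\mathbf{x},\mathbf{x}\rangle-\langle\mathbf{y},\mathbf{y}\rangle}{\langle\mathbf{x}+\mathbf{y},\mathbf{x}+\mathbf{y}\rangle}.$$ Define the momentum-energy map $$\mathbf{R}:(\mathbf{x},\mathbf{y})\mapsto(\mathbf{u},\mathbf{v}):=\big(\mathbf{y}+k(\mathbf{x},\mathbf{y})(\mathbf{x}+\mathbf{y}),\ \mathbf{x}-k(\mathbf{x},\mathbf{y})(\mathbf{x}+\mathbf{y})\big)$$ (defined where $\langle\mathbf{x}+\mathbf{y},\mathbf{x}+\mathbf{y}\rangle\neq 0$). Then $\mathbf{R}$ is a (non-parametric) quadrirational Yang--Baxter map, and it has Lax matrix $$\mathbf{L}(\mathbf{x},\zeta)=\begin{pmatrix}\zeta & x_0+x_1\\ x_0-x_1 & \zeta\end{pmatrix},$$ i.e. $\mathbf{L}(\mathbf{u},\zeta)\mathbf{L}(\mathbf{v},\zeta)=\mathbf{L}(\mathbf{y},\zeta)\mathbf{L}(\mathbf{x},\zeta)$ for all $\zeta\in\mathbb{C}$ whenever $(\mathbf{u},\mathbf{v})=\mathbf{R}(\mathbf{x},\mathbf{y})$.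
   Context: A map $R:\mathcal{X}\times\mathcal{X}\to\mathcal{X}\times\mathcal{X}$, $R(x,y)=(u(x,y),v(x,y))$, is a Yang--Baxter map if $R_{23}\circ R_{13}\circ R_{12}=R_{12}\circ R_{13}\circ R_{23}$ on $\mathcal{X}^3$, where $R_{12}(x,y,z)=(u(x,y),v(x,y),z)$, $R_{13}(x,y,z)=(u(x,z),y,v(x,z))$, $R_{23}(x,y,z)=(x,u(y,z),v(y,z))$. It is quadrirational if, for fixed $y$ and fixed $x$ respectively, the maps $u(\cdot,y)$ and $v(x,\cdot)$ are birational isomorphisms of $\mathcal{X}$ to itself. A matrix $L(x,\zeta)$ depending on $x\in\mathcal{X}$ and a spectral parameter $\zeta\in\mathbb{C}$ is a Lax matrix of $R$ if $L(u,\zeta)L(v,\zeta)=L(y,\zeta)L(x,\zeta)$ whenever $(u,v)=R(x,y)$. Here $\mathcal{X}=\mathbb{R}^2$ (maps understood generically, where defined). *)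

theory Defs
  imports "HOL-Analysis.Analysis" "HOL-Computational_Algebra.Polynomial"
begin

type_synonym pt = "real \<times> real"

definition mip :: "pt \<Rightarrow> pt \<Rightarrow> real" where
  "mip x y = fst x * fst y - snd x * snd y"

definition kfun :: "pt \<Rightarrow> pt \<Rightarrow> real" where
  "kfun x y = (mip x x - mip y y) / mip (x + y) (x + y)"

definition Rdef :: "pt \<Rightarrow> pt \<Rightarrow> bool" where
  "Rdef x y \<longleftrightarrow> mip (x + y) (x + y) \<noteq> 0"

definition uR :: "pt \<Rightarrow> pt \<Rightarrow> pt" where
  "uR x y = y + kfun x y *\<^sub>R (x + y)"

definition vR :: "pt \<Rightarrow> pt \<Rightarrow> pt" where
  "vR x y = x - kfun x y *\<^sub>R (x + y)"

definition Rmap :: "pt \<Rightarrow> pt \<Rightarrow> (pt \<times> pt) option" where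
  "Rmap x y = (if Rdef x y then Some (uR x y, vR x y) else None)"

definition R12 :: "pt \<times> pt \<times> pt \<Rightarrow> (pt \<times> pt \<times> pt) option" where
  "R12 t = (case t of (x, y, z) \<Rightarrow> map_option (\<lambda>(u, v). (u, v, z)) (Rmap x y))"
definition R13 :: "pt \<times> pt \<times> pt \<Rightarrow> (pt \<times> pt \<times> pt) option" where
  "R13 t = (case t of (x, y, z) \<Rightarrow> map_option (\<lambda>(u, v). (u, y, v)) (Rmap x z))"
definition R23 :: "pt \<times> pt \<times> pt \<Rightarrow> (pt \<times> pt \<times> pt) option" where
  "R23 t = (case t of (x, y, z) \<Rightarrow> map_option (\<lambda>(u, v). (x, u, v)) (Rmap y z))"

definition lhs_YB :: "pt \<times> pt \<times> pt \<Rightarrow> (pt \<times> pt \<times> pt) option" where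
  "lhs_YB t = Option.bind (Option.bind (R12 t) R13) R23"
definition rhs_YB :: "pt \<times> pt \<times> pt \<Rightarrow> (pt \<times> pt \<times> pt) option" where
  "rhs_YB t = Option.bind (Option.bind (R23 t) R13) R12"

definition yang_baxter :: bool where
  "yang_baxter \<longleftrightarrow> (\<forall>t.
     lhs_YB t \<noteq> None \<and> rhs_YB t \<noteq> None \<longrightarrow> lhs_YB t = rhs_YB t)"

text \<open>Bivariate real polynomials: polynomials in x1 with coefficients polynomials in x0.\<close>
definition eval2 :: "real poly poly \<Rightarrow> pt \<Rightarrow> real" where
  "eval2 p z = poly (map_poly (\<lambda>c. poly c (fst z)) p) (snd z)"

text \<open>A rational map R^2 -> R^2, given by (P0, Q0, P1, Q1), components P0/Q0 and P1/Q1.\<close>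
type_synonym ratmap = "real poly poly \<times> real poly poly \<times> real poly poly \<times> real poly poly"

definition is_ratmap :: "ratmap \<Rightarrow> bool" where
  "is_ratmap \<phi> = (case \<phi> of (P0, Q0, P1, Q1) \<Rightarrow> Q0 \<noteq> 0 \<and> Q1 \<noteq> 0)"

definition rdom :: "ratmap \<Rightarrow> pt set" where
  "rdom \<phi> = (case \<phi> of (P0, Q0, P1, Q1) \<Rightarrow> {z. eval2 Q0 z \<noteq> 0 \<and> eval2 Q1 z \<noteq> 0})"

definition rapp :: "ratmap \<Rightarrow> pt \<Rightarrow> pt" where
  "rapp \<phi> z = (case \<phi> of (P0, Q0, P1, Q1) \<Rightarrow> (eval2 P0 z / eval2 Q0 z, eval2 P1 z / eval2 Q1 z))"

text \<open>psi is a rational inverse of phi: psi o phi = id wherever defined, and the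
  set where the composite is defined is nonempty (hence Zariski-dense).\<close>
definition rat_left_inverse :: "ratmap \<Rightarrow> ratmap \<Rightarrow> bool" where
  "rat_left_inverse \<psi> \<phi> \<longleftrightarrow>
     {z \<in> rdom \<phi>. rapp \<phi> z \<in> rdom \<psi>} \<noteq> {} \<and>
     (\<forall>z \<in> rdom \<phi>. rapp \<phi> z \<in> rdom \<psi> \<longrightarrow> rapp \<psi> (rapp \<phi> z) = z)"

definition birational_on :: "pt set \<Rightarrow> (pt \<Rightarrow> pt) \<Rightarrow> bool" where
  "birational_on D f \<longleftrightarrow> (\<exists>\<phi> \<psi>. is_ratmap \<phi> \<and> is_ratmap \<psi> \<and>
     D \<inter> rdom \<phi> \<noteq> {} \<and> (\<forall>z \<in> D \<inter> rdom \<phi>. rapp \<phi> z = f z) \<and>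
     rat_left_inverse \<psi> \<phi> \<and> rat_left_inverse \<phi> \<psi>)"

definition quadrirational :: bool where
  "quadrirational \<longleftrightarrow>
     (\<forall>y. birational_on {x. Rdef x y} (\<lambda>x. uR x y)) \<and>
     (\<forall>x. birational_on {y. Rdef x y} (\<lambda>y. vR x y))"

definition Lax :: "pt \<Rightarrow> complex \<Rightarrow> complex ^ 2 ^ 2" where
  "Lax x \<zeta> = vector [vector [\<zeta>, complex_of_real (fst x + snd x)],
                      vector [complex_of_real (fst x - snd x), \<zeta>]]"

end

theory Submission
  imports Defs
begin

text \<open>In light-cone coordinates \<open>x\<^sub>\<plusminus> = x\<^sub>0 \<plusminus> x\<^sub>1\<close> the Minkowski square is \<open>x\<^sub>+ x\<^sub>-\<close>, and the map becomes
  \<open>u = B\<^sub>\<rho> (\<sigma> x)\<close>, \<open>v = B\<^sub>\<rho> (\<sigma> y)\<close>: the reflection \<open>\<sigma>\<close> swaps \<open>x\<^sub>+\<close> and \<open>x\<^sub>-\<close>, the boost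
  \<open>B\<^sub>\<rho>\<close> scales them by \<open>\<rho>\<close> and \<open>1/\<rho>\<close>, and \<open>\<rho> = (x\<^sub>+ + y\<^sub>+) / (x\<^sub>- + y\<^sub>-)\<close> depends
  only on the total momentum. Since \<open>B\<^sub>s \<sigma> B\<^sub>t \<sigma> = B\<^sub>s\<^sub>/\<^sub>t\<close>, both sides of the Yang--Baxter
  equation merely boost each of \<open>x, y, z\<close> by a quotient of two of the boost factors that
  occur, and the equation reduces to three identities between these factors.
  The Lax equation amounts to \<open>u + v = x + y\<close>, \<open>u\<^sub>+ v\<^sub>- = y\<^sub>+ x\<^sub>-\<close> and \<open>u\<^sub>- v\<^sub>+ = y\<^sub>- x\<^sub>+\<close>.
  Finally \<open>u(\<cdot>, y)\<close> is rational with inverse the same map for \<open>-y\<close>, and \<open>v(x, y) = u(y, x)\<close>.\<close>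

definition lplus :: "pt \<Rightarrow> real" where
  "lplus x = fst x + snd x"

definition lminus :: "pt \<Rightarrow> real" where
  "lminus x = fst x - snd x"

definition lc_point :: "real \<Rightarrow> real \<Rightarrow> pt" where
  "lc_point \<alpha> \<beta> = ((\<alpha> + \<beta>) / 2, (\<alpha> - \<beta>) / 2)"

lemma lplus_lc_point [simp]: "lplus (lc_point \<alpha> \<beta>) = \<alpha>"
  and lminus_lc_point [simp]: "lminus (lc_point \<alpha> \<beta>) = \<beta>"
  by (simp_all add: lplus_def lminus_def lc_point_def field_simps)

lemma pt_eq_iff_lc: "x = y \<longleftrightarrow> lplus x = lplus y \<and> lminus x = lminus y"
  by (cases x; cases y) (auto simp: lplus_def lminus_def)

lemma lplus_add [simp]: "lplus (x + y) = lplus x + lplus y"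
  and lminus_add [simp]: "lminus (x + y) = lminus x + lminus y"
  and lplus_diff [simp]: "lplus (x - y) = lplus x - lplus y"
  and lminus_diff [simp]: "lminus (x - y) = lminus x - lminus y"
  and lplus_scaleR [simp]: "lplus (c *\<^sub>R x) = c * lplus x"
  and lminus_scaleR [simp]: "lminus (c *\<^sub>R x) = c * lminus x"
  by (simp_all add: lplus_def lminus_def algebra_simps)

lemma mip_self: "mip x x = lplus x * lminus x"
  by (simp add: mip_def lplus_def lminus_def algebra_simps)

lemma Rdef_iff_lc: "Rdef x y \<longleftrightarrow> lplus x + lplus y \<noteq> 0 \<and> lminus x + lminus y \<noteq> 0"
  by (simp add: Rdef_def mip_self)

definition reflect :: "pt \<Rightarrow> pt" where
  "reflect x = lc_point (lminus x) (lplus x)"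

definition boost :: "real \<Rightarrow> pt \<Rightarrow> pt" where
  "boost t x = lc_point (t * lplus x) (lminus x / t)"

definition boost_factor :: "pt \<Rightarrow> pt \<Rightarrow> real" where
  "boost_factor x y = lplus (x + y) / lminus (x + y)"

lemma lplus_reflect [simp]: "lplus (reflect x) = lminus x"
  and lminus_reflect [simp]: "lminus (reflect x) = lplus x"
  and lplus_boost [simp]: "lplus (boost t x) = t * lplus x"
  and lminus_boost [simp]: "lminus (boost t x) = lminus x / t"
  by (simp_all add: reflect_def boost_def)

lemma boost_1 [simp]: "boost 1 x = x"
  by (simp add: pt_eq_iff_lc)

text \<open>No side condition is needed: for \<open>t = 0\<close> both sides are the origin, as \<open>s / 0 = 0\<close>.\<close>

lemma boost_reflect_boost_reflect: "boost s (reflect (boost t (reflect x))) = boost (s / t) x"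
  by (simp add: pt_eq_iff_lc)

lemma momentum_energy_light_cone:
  fixes a b c d :: real
  assumes "a + c \<noteq> 0" "b + d \<noteq> 0"
  defines "k \<equiv> (a * b - c * d) / ((a + c) * (b + d))" and "\<rho> \<equiv> (a + c) / (b + d)"
  shows "c + k * (a + c) = \<rho> * b" "d + k * (b + d) = a / \<rho>"
    and "a - k * (a + c) = \<rho> * d" "b - k * (b + d) = c / \<rho>"
proof -
  have "k * (a + c) = (a * b - c * d) / (b + d)" "k * (b + d) = (a * b - c * d) / (a + c)"
    using assms by (simp_all add: k_def)
  then show "c + k * (a + c) = \<rho> * b" "d + k * (b + d) = a / \<rho>"
    and "a - k * (a + c) = \<rho> * d" "b - k * (b + d) = c / \<rho>"
    using assms by (simp_all add: \<rho>_def field_simps)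
qed

lemma uR_vR_boost:
  assumes "Rdef x y"
  shows "uR x y = boost (boost_factor x y) (reflect x)"
    and "vR x y = boost (boost_factor x y) (reflect y)"
  using assms momentum_energy_light_cone[of "lplus x" "lplus y" "lminus x" "lminus y"]
  by (simp_all add: pt_eq_iff_lc uR_def vR_def Rdef_iff_lc kfun_def mip_self boost_factor_def)

text \<open>Writing \<open>x, y, z\<close> in light-cone coordinates as \<open>(a, b), (c, d), (e, f)\<close>, the \<open>\<rho>\<^sub>i\<close> are
  the boost factors of the three interactions on the left-hand side of the Yang--Baxter
  equation and the \<open>\<tau>\<^sub>i\<close> those on the right-hand side.\<close>

lemma boost_factors_yang_baxter:
  fixes a b c d e f :: real
  assumes \<rho>\<^sub>1: "\<rho>\<^sub>1 = (a + c) / (b + d)"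
    and \<rho>\<^sub>2: "\<rho>\<^sub>2 = (\<rho>\<^sub>1 * b + e) / (a / \<rho>\<^sub>1 + f)"
    and \<rho>\<^sub>3: "\<rho>\<^sub>3 = (\<rho>\<^sub>1 * d + \<rho>\<^sub>2 * f) / (c / \<rho>\<^sub>1 + e / \<rho>\<^sub>2)"
    and \<tau>\<^sub>1: "\<tau>\<^sub>1 = (c + e) / (d + f)"
    and \<tau>\<^sub>2: "\<tau>\<^sub>2 = (a + \<tau>\<^sub>1 * f) / (b + e / \<tau>\<^sub>1)"
    and \<tau>\<^sub>3: "\<tau>\<^sub>3 = (\<tau>\<^sub>2 * b + \<tau>\<^sub>1 * d) / (a / \<tau>\<^sub>2 + c / \<tau>\<^sub>1)"
    and nz: "a + c \<noteq> 0" "b + d \<noteq> 0" "\<rho>\<^sub>1 * b + e \<noteq> 0" "a / \<rho>\<^sub>1 + f \<noteq> 0"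
      "c + e \<noteq> 0" "d + f \<noteq> 0" "a + \<tau>\<^sub>1 * f \<noteq> 0" "b + e / \<tau>\<^sub>1 \<noteq> 0"
  shows "\<rho>\<^sub>2 / \<rho>\<^sub>1 = \<tau>\<^sub>3 / \<tau>\<^sub>2" "\<rho>\<^sub>3 / \<rho>\<^sub>1 = \<tau>\<^sub>3 / \<tau>\<^sub>1" "\<rho>\<^sub>3 / \<rho>\<^sub>2 = \<tau>\<^sub>2 / \<tau>\<^sub>1"
proof -
  define p q r t where "p = a + c" "q = b + d" "r = c + e" "t = d + f"
  define A B F G where "A = p * b + q * e" "B = q * a + p * f" "F = t * a + r * f" "G = r * b + t * e"
  have pqrt: "p \<noteq> 0" "q \<noteq> 0" "r \<noteq> 0" "t \<noteq> 0"
    using nz by (simp_all add: p_q_r_t_def)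
  have sums\<^sub>1: "\<rho>\<^sub>1 * b + e = A / q" "a / \<rho>\<^sub>1 + f = B / p"
    using pqrt by (simp_all add: \<rho>\<^sub>1 A_B_F_G_def p_q_r_t_def[symmetric] field_simps)
  then have AB: "A \<noteq> 0" "B \<noteq> 0"
    using nz by simp_all
  have sums\<^sub>2: "a + \<tau>\<^sub>1 * f = F / t" "b + e / \<tau>\<^sub>1 = G / r"
    using pqrt by (simp_all add: \<tau>\<^sub>1 A_B_F_G_def p_q_r_t_def[symmetric] field_simps)
  then have FG: "F \<noteq> 0" "G \<noteq> 0"
    using nz by simp_all
  \<comment> \<open>With these identities the quotients become \<open>A / B\<close>, \<open>A F / (B G)\<close> and \<open>F / G\<close> on both sides.\<close>
  have ids: "d * B + f * A = q * F" "c * A + e * B = p * G"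
      "b * F + d * G = t * A" "a * G + c * F = r * B"
    by (simp_all add: A_B_F_G_def p_q_r_t_def algebra_simps)
  have \<rho>\<^sub>1': "\<rho>\<^sub>1 = p / q"
    by (simp add: \<rho>\<^sub>1 p_q_r_t_def)
  have \<rho>\<^sub>2': "\<rho>\<^sub>2 = p * A / (q * B)"
    using pqrt by (simp add: \<rho>\<^sub>2 sums\<^sub>1)
  have "\<rho>\<^sub>1 * d + \<rho>\<^sub>2 * f = p * F / B" "c / \<rho>\<^sub>1 + e / \<rho>\<^sub>2 = q * G / A"
    using pqrt AB ids by (simp_all add: \<rho>\<^sub>1' \<rho>\<^sub>2' field_simps) algebra+
  then have \<rho>\<^sub>3': "\<rho>\<^sub>3 = p * A * F / (q * B * G)"
    by (simp add: \<rho>\<^sub>3 ac_simps)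
  have \<tau>\<^sub>1': "\<tau>\<^sub>1 = r / t"
    by (simp add: \<tau>\<^sub>1 p_q_r_t_def)
  have \<tau>\<^sub>2': "\<tau>\<^sub>2 = r * F / (t * G)"
    using pqrt by (simp add: \<tau>\<^sub>2 sums\<^sub>2)
  have "\<tau>\<^sub>2 * b + \<tau>\<^sub>1 * d = r * A / G" "a / \<tau>\<^sub>2 + c / \<tau>\<^sub>1 = t * B / F"
    using pqrt FG ids by (simp_all add: \<tau>\<^sub>1' \<tau>\<^sub>2' field_simps) algebra+
  then have \<tau>\<^sub>3': "\<tau>\<^sub>3 = r * A * F / (t * B * G)"
    by (simp add: \<tau>\<^sub>3 ac_simps)
  show "\<rho>\<^sub>2 / \<rho>\<^sub>1 = \<tau>\<^sub>3 / \<tau>\<^sub>2" "\<rho>\<^sub>3 / \<rho>\<^sub>1 = \<tau>\<^sub>3 / \<tau>\<^sub>1" "\<rho>\<^sub>3 / \<rho>\<^sub>2 = \<tau>\<^sub>2 / \<tau>\<^sub>1"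
    unfolding \<rho>\<^sub>1' \<rho>\<^sub>2' \<rho>\<^sub>3' \<tau>\<^sub>1' \<tau>\<^sub>2' \<tau>\<^sub>3' using pqrt AB FG by (simp_all add: field_simps)
qed

lemma lhs_YB_eq:
  "lhs_YB (x, y, z) =
    (if Rdef x y \<and> Rdef (uR x y) z \<and> Rdef (vR x y) (vR (uR x y) z)
     then Some (uR (uR x y) z, uR (vR x y) (vR (uR x y) z), vR (vR x y) (vR (uR x y) z))
     else None)"
  by (simp add: lhs_YB_def R12_def R13_def R23_def Rmap_def)

lemma rhs_YB_eq:
  "rhs_YB (x, y, z) =
    (if Rdef y z \<and> Rdef x (vR y z) \<and> Rdef (uR x (vR y z)) (uR y z)
     then Some (uR (uR x (vR y z)) (uR y z), vR (uR x (vR y z)) (uR y z), vR x (vR y z))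
     else None)"
  by (simp add: rhs_YB_def R12_def R13_def R23_def Rmap_def)

lemma yang_baxter_triple:
  assumes l: "Rdef x y" "Rdef (uR x y) z" "Rdef (vR x y) (vR (uR x y) z)"
    and r: "Rdef y z" "Rdef x (vR y z)" "Rdef (uR x (vR y z)) (uR y z)"
  shows "(uR (uR x y) z, uR (vR x y) (vR (uR x y) z), vR (vR x y) (vR (uR x y) z)) =
    (uR (uR x (vR y z)) (uR y z), vR (uR x (vR y z)) (uR y z), vR x (vR y z))"
proof -
  define \<rho>\<^sub>1 \<rho>\<^sub>2 \<rho>\<^sub>3 where \<rho>_def: "\<rho>\<^sub>1 = boost_factor x y" "\<rho>\<^sub>2 = boost_factor (uR x y) z"
    "\<rho>\<^sub>3 = boost_factor (vR x y) (vR (uR x y) z)"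
  define \<tau>\<^sub>1 \<tau>\<^sub>2 \<tau>\<^sub>3 where \<tau>_def: "\<tau>\<^sub>1 = boost_factor y z" "\<tau>\<^sub>2 = boost_factor x (vR y z)"
    "\<tau>\<^sub>3 = boost_factor (uR x (vR y z)) (uR y z)"
  note l' = uR_vR_boost[OF l(1), folded \<rho>_def] uR_vR_boost[OF l(2), folded \<rho>_def]
    uR_vR_boost[OF l(3), folded \<rho>_def]
  note r' = uR_vR_boost[OF r(1), folded \<tau>_def] uR_vR_boost[OF r(2), folded \<tau>_def]
    uR_vR_boost[OF r(3), folded \<tau>_def]
  have lhs: "(uR (uR x y) z, uR (vR x y) (vR (uR x y) z), vR (vR x y) (vR (uR x y) z)) =
      (boost (\<rho>\<^sub>2 / \<rho>\<^sub>1) x, boost (\<rho>\<^sub>3 / \<rho>\<^sub>1) y, boost (\<rho>\<^sub>3 / \<rho>\<^sub>2) z)"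
    using l' by (simp add: boost_reflect_boost_reflect)
  have rhs: "(uR (uR x (vR y z)) (uR y z), vR (uR x (vR y z)) (uR y z), vR x (vR y z)) =
      (boost (\<tau>\<^sub>3 / \<tau>\<^sub>2) x, boost (\<tau>\<^sub>3 / \<tau>\<^sub>1) y, boost (\<tau>\<^sub>2 / \<tau>\<^sub>1) z)"
    using r' by (simp add: boost_reflect_boost_reflect)
  have \<rho>\<^sub>1: "\<rho>\<^sub>1 = (lplus x + lplus y) / (lminus x + lminus y)"
    by (simp add: \<rho>_def(1) boost_factor_def)
  have \<rho>\<^sub>2: "\<rho>\<^sub>2 = (\<rho>\<^sub>1 * lminus x + lplus z) / (lplus x / \<rho>\<^sub>1 + lminus z)"
    unfolding \<rho>_def(2) boost_factor_def l'(1) by simp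
  have \<rho>\<^sub>3: "\<rho>\<^sub>3 = (\<rho>\<^sub>1 * lminus y + \<rho>\<^sub>2 * lminus z) / (lplus y / \<rho>\<^sub>1 + lplus z / \<rho>\<^sub>2)"
    unfolding \<rho>_def(3) boost_factor_def l'(2,4) by simp
  have \<tau>\<^sub>1: "\<tau>\<^sub>1 = (lplus y + lplus z) / (lminus y + lminus z)"
    by (simp add: \<tau>_def(1) boost_factor_def)
  have \<tau>\<^sub>2: "\<tau>\<^sub>2 = (lplus x + \<tau>\<^sub>1 * lminus z) / (lminus x + lplus z / \<tau>\<^sub>1)"
    unfolding \<tau>_def(2) boost_factor_def r'(2) by simp
  have \<tau>\<^sub>3: "\<tau>\<^sub>3 = (\<tau>\<^sub>2 * lminus x + \<tau>\<^sub>1 * lminus y) / (lplus x / \<tau>\<^sub>2 + lplus y / \<tau>\<^sub>1)"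
    unfolding \<tau>_def(3) boost_factor_def r'(1,3) by simp
  have nz: "lplus x + lplus y \<noteq> 0" "lminus x + lminus y \<noteq> 0"
      "\<rho>\<^sub>1 * lminus x + lplus z \<noteq> 0" "lplus x / \<rho>\<^sub>1 + lminus z \<noteq> 0"
      "lplus y + lplus z \<noteq> 0" "lminus y + lminus z \<noteq> 0"
      "lplus x + \<tau>\<^sub>1 * lminus z \<noteq> 0" "lminus x + lplus z / \<tau>\<^sub>1 \<noteq> 0"
    using l(1,2) r(1,2) by (simp_all add: Rdef_iff_lc l' r')
  show ?thesis
    using boost_factors_yang_baxter[OF \<rho>\<^sub>1 \<rho>\<^sub>2 \<rho>\<^sub>3 \<tau>\<^sub>1 \<tau>\<^sub>2 \<tau>\<^sub>3 nz] unfolding lhs rhs by simp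
qed

theorem yang_baxter_momentum_energy: yang_baxter
  unfolding yang_baxter_def
proof (intro allI impI)
  fix t :: "pt \<times> pt \<times> pt"
  assume "lhs_YB t \<noteq> None \<and> rhs_YB t \<noteq> None"
  moreover obtain x y z where "t = (x, y, z)"
    by (cases t) auto
  ultimately show "lhs_YB t = rhs_YB t"
    using yang_baxter_triple by (auto simp: lhs_YB_eq rhs_YB_eq split: if_splits)
qed

lemma Lax_mult:
  "Lax x \<zeta> ** Lax y \<zeta> =
    vector [vector [\<zeta>\<^sup>2 + of_real (lplus x * lminus y), \<zeta> * of_real (lplus x + lplus y)],
            vector [\<zeta> * of_real (lminus x + lminus y), \<zeta>\<^sup>2 + of_real (lminus x * lplus y)]]"
  by (simp add: Lax_def vec_eq_iff forall_2 matrix_matrix_mult_def sum_2 lplus_def lminus_def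
      power2_eq_square algebra_simps)

lemma Lax_refactorization:
  assumes "u + v = y + x" "lplus u * lminus v = lplus y * lminus x"
    and "lminus u * lplus v = lminus y * lplus x"
  shows "Lax u \<zeta> ** Lax v \<zeta> = Lax y \<zeta> ** Lax x \<zeta>"
proof -
  have "lplus u + lplus v = lplus y + lplus x" "lminus u + lminus v = lminus y + lminus x"
    using arg_cong[OF assms(1), of lplus] arg_cong[OF assms(1), of lminus] by simp_all
  then show ?thesis
    using assms(2,3) by (simp add: Lax_mult)
qed

lemma Lax_Rmap:
  assumes "Rmap x y = Some (u, v)"
  shows "Lax u \<zeta> ** Lax v \<zeta> = Lax y \<zeta> ** Lax x \<zeta>"
proof (rule Lax_refactorization)
  have R: "Rdef x y" and uv: "u = uR x y" "v = vR x y"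
    using assms by (auto simp: Rmap_def split: if_splits)
  then have "boost_factor x y \<noteq> 0"
    by (simp add: Rdef_iff_lc boost_factor_def)
  then show "lplus u * lminus v = lplus y * lminus x" "lminus u * lplus v = lminus y * lplus x"
    by (simp_all add: uv uR_vR_boost[OF R])
  show "u + v = y + x"
    by (simp add: uv uR_def vR_def)
qed

lemma eval2_0 [simp]: "eval2 0 z = 0"
  by (simp add: eval2_def)

lemma eval2_pCons [simp]: "eval2 (pCons a p) z = poly a (fst z) + snd z * eval2 p z"
  by (simp add: eval2_def map_poly_pCons)

lemma eval2_add [simp]: "eval2 (p + q) z = eval2 p z + eval2 q z"
  by (induction p q rule: poly_induct2) (simp_all add: algebra_simps)

lemma eval2_uminus [simp]: "eval2 (- p) z = - eval2 p z"
  by (induction p) simp_all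

lemma eval2_diff [simp]: "eval2 (p - q) z = eval2 p z - eval2 q z"
  using eval2_add[of p "- q" z] by simp

lemma eval2_smult: "eval2 (smult a p) z = poly a (fst z) * eval2 p z"
  by (induction p) (simp_all add: algebra_simps)

lemma eval2_mult [simp]: "eval2 (p * q) z = eval2 p z * eval2 q z"
  by (induction p) (simp_all add: eval2_smult algebra_simps)

lemma eval2_numeral [simp]: "eval2 (numeral n) z = numeral n"
  by (simp add: numeral_poly)

definition lplus_poly :: "real poly poly" where
  "lplus_poly = [:[:0, 1:]:] + [:0, 1:]"

definition lminus_poly :: "real poly poly" where
  "lminus_poly = [:[:0, 1:]:] - [:0, 1:]"

lemma eval2_lplus_poly [simp]: "eval2 lplus_poly z = lplus z"
  and eval2_lminus_poly [simp]: "eval2 lminus_poly z = lminus z"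
  by (simp_all add: lplus_poly_def lminus_poly_def lplus_def lminus_def)

definition lc_ratmap :: "real poly poly \<Rightarrow> real poly poly \<Rightarrow> real poly poly \<Rightarrow> real poly poly \<Rightarrow> ratmap" where
  "lc_ratmap P Q P' Q' = (P * Q' + P' * Q, 2 * Q * Q', P * Q' - P' * Q, 2 * Q * Q')"

lemma rdom_lc_ratmap: "z \<in> rdom (lc_ratmap P Q P' Q') \<longleftrightarrow> eval2 Q z \<noteq> 0 \<and> eval2 Q' z \<noteq> 0"
  by (auto simp: rdom_def lc_ratmap_def)

lemma rapp_lc_ratmap:
  assumes "z \<in> rdom (lc_ratmap P Q P' Q')"
  shows "rapp (lc_ratmap P Q P' Q') z = lc_point (eval2 P z / eval2 Q z) (eval2 P' z / eval2 Q' z)"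
  using assms unfolding rdom_lc_ratmap by (simp add: rapp_def lc_ratmap_def lc_point_def field_simps)

lemma is_ratmap_if_rdom: "z \<in> rdom \<phi> \<Longrightarrow> is_ratmap \<phi>"
  by (cases \<phi>) (auto simp: rdom_def is_ratmap_def)

definition uR_ratmap :: "real \<Rightarrow> real \<Rightarrow> ratmap" where
  "uR_ratmap c d = lc_ratmap (lminus_poly * (lplus_poly + [:[:c:]:])) (lminus_poly + [:[:d:]:])
     (lplus_poly * (lminus_poly + [:[:d:]:])) (lplus_poly + [:[:c:]:])"

lemma rdom_uR_ratmap: "z \<in> rdom (uR_ratmap c d) \<longleftrightarrow> lplus z + c \<noteq> 0 \<and> lminus z + d \<noteq> 0"
  by (auto simp: uR_ratmap_def rdom_lc_ratmap)

lemma rapp_uR_ratmap: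
  assumes "z \<in> rdom (uR_ratmap c d)"
  shows "rapp (uR_ratmap c d) z = boost ((lplus z + c) / (lminus z + d)) (reflect z)"
  using assms unfolding uR_ratmap_def
  by (simp add: rapp_lc_ratmap pt_eq_iff_lc rdom_lc_ratmap)

lemma uR_ratmap_left_inverse: "rat_left_inverse (uR_ratmap (- c) (- d)) (uR_ratmap c d)"
  unfolding rat_left_inverse_def
proof (intro conjI ballI impI)
  \<comment> \<open>A point with \<open>z\<^sub>+ + c = z\<^sub>- + d = s\<close> is mapped to its reflection; it is a valid witness
    unless \<open>s \<in> {0, c + d}\<close>.\<close>
  define s where "s = \<bar>c + d\<bar> + 1"
  have "lc_point (s - c) (s - d) \<in> rdom (uR_ratmap c d)"
    and "rapp (uR_ratmap c d) (lc_point (s - c) (s - d)) \<in> rdom (uR_ratmap (- c) (- d))"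
    by (auto simp: s_def rdom_uR_ratmap rapp_uR_ratmap abs_if split: if_splits)
  then show "{z \<in> rdom (uR_ratmap c d). rapp (uR_ratmap c d) z \<in> rdom (uR_ratmap (- c) (- d))} \<noteq> {}"
    by blast
next
  fix z
  assume z: "z \<in> rdom (uR_ratmap c d)"
    and w: "rapp (uR_ratmap c d) z \<in> rdom (uR_ratmap (- c) (- d))"
  define \<rho> where "\<rho> = (lplus z + c) / (lminus z + d)"
  have z_image: "rapp (uR_ratmap c d) z = boost \<rho> (reflect z)"
    using z by (simp add: rapp_uR_ratmap \<rho>_def)
  have nz: "lplus z + c \<noteq> 0" "lminus z + d \<noteq> 0" "lplus z / \<rho> - d \<noteq> 0"
    using z w by (simp_all add: rdom_uR_ratmap z_image)
  define m where "m = lplus z * lminus z - c * d"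
  have eqs: "\<rho> * lminus z - c = m / (lminus z + d)" "lplus z / \<rho> - d = m / (lplus z + c)"
    using nz by (simp_all add: \<rho>_def m_def field_simps)
  have "m \<noteq> 0"
    using nz(3) eqs(2) by auto
  then have "(\<rho> * lminus z - c) / (lplus z / \<rho> - d) = \<rho>"
    unfolding eqs using nz by (simp add: \<rho>_def)
  moreover have "\<rho> \<noteq> 0"
    using nz by (simp add: \<rho>_def)
  ultimately show "rapp (uR_ratmap (- c) (- d)) (rapp (uR_ratmap c d) z) = z"
    using w by (simp add: rapp_uR_ratmap z_image boost_reflect_boost_reflect)
qed

lemma rat_left_inverse_is_ratmap:
  assumes "rat_left_inverse \<psi> \<phi>"
  shows "is_ratmap \<phi>" "is_ratmap \<psi>"
  using assms is_ratmap_if_rdom unfolding rat_left_inverse_def by blast+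

lemma birational_uR: "birational_on {x. Rdef x y} (\<lambda>x. uR x y)"
proof -
  define \<phi> \<psi> where \<phi>_\<psi>_def: "\<phi> = uR_ratmap (lplus y) (lminus y)" "\<psi> = uR_ratmap (- lplus y) (- lminus y)"
  have inv: "rat_left_inverse \<psi> \<phi>" "rat_left_inverse \<phi> \<psi>"
    using uR_ratmap_left_inverse[of "lplus y" "lminus y"] uR_ratmap_left_inverse[of "- lplus y" "- lminus y"]
    by (simp_all add: \<phi>_\<psi>_def)
  have dom: "{x. Rdef x y} = rdom \<phi>"
    by (auto simp: \<phi>_\<psi>_def rdom_uR_ratmap Rdef_iff_lc)
  have "rdom \<phi> \<noteq> {}"
    using inv(1) by (auto simp: rat_left_inverse_def)
  moreover have "rapp \<phi> x = uR x y" if "x \<in> rdom \<phi>" for x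
  proof -
    have "Rdef x y"
      using that dom by blast
    with that show ?thesis
      by (simp add: \<phi>_\<psi>_def rapp_uR_ratmap uR_vR_boost boost_factor_def)
  qed
  ultimately show ?thesis
    unfolding birational_on_def dom
    using inv rat_left_inverse_is_ratmap[OF inv(1)] by (intro exI[of _ \<phi>] exI[of _ \<psi>]) auto
qed

lemma vR_eq_uR_swap: "vR x y = uR y x"
proof -
  have "kfun y x = - kfun x y"
    by (simp add: kfun_def add.commute diff_divide_distrib)
  then show ?thesis
    by (simp add: uR_def vR_def add.commute)
qed

lemma Rdef_commute: "Rdef x y \<longleftrightarrow> Rdef y x"
  by (simp add: Rdef_def add.commute)

theorem quadrirational_momentum_energy: quadrirational
  unfolding quadrirational_def
proof (intro conjI allI)
  fix x y
  show "birational_on {x. Rdef x y} (\<lambda>x. uR x y)"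
    by (rule birational_uR)
  show "birational_on {y. Rdef x y} (\<lambda>y. vR x y)"
    unfolding vR_eq_uR_swap Rdef_commute[of x] by (rule birational_uR)
qed

theorem proposition3p1:
  shows "yang_baxter \<and> quadrirational \<and>
    (\<forall>x y u v. Rmap x y = Some (u, v) \<longrightarrow>
       (\<forall>\<zeta>::complex. Lax u \<zeta> ** Lax v \<zeta> = Lax y \<zeta> ** Lax x \<zeta>))"
  using yang_baxter_momentum_energy quadrirational_momentum_energy Lax_Rmap by blast

end
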